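(* Let $K$ be a field, $S=K[x_1,\ldots,x_n]$, $I\subset S$ a monomial ideal with $I\ne S$ and $G(I)=\{x^{a_1},\ldots,x^{a_m}\}$. Let $T$, $T_l$ be as in the context. For $l=1,\ldots,n$ and $j=1,\ldots,m$ let $L_{l,a_j(l)}$ be a monomial ideal of $T_l$ such that $L_{l,a_j(l)}\subset L_{l,a_k(l)}$ whenever $a_j(l)\ge a_k(l)$, and put $L_j=\prod_{l=1}^nL_{l,a_j(l)}\subset T$. Let $\mathbb{F}^*$ be the complex of $L_1,\ldots,L_m$ induced by $I$. Then $\mathbb{F}^*$ is acyclic (i.e. $H_i(\mathbb{F}^* )=0$ for $i>0$) and $H_0(\mathbb{F}^* )=T/L$, where $L=\sum_{j=1}^mL_j$.
   Context: For $a\in\mathbb{N}^n$, $x^a=x_1^{a(1)}\cdots x_n^{a(n)}$; $G(I)$ is the minimal monomial generating set. $T$ is the polynomial ring over $K$ in variables $x_{l1},\ldots,x_{lm_l}$ ($l=1,\ldots,n$) and $T_l=K[x_{l1},\ldots,x_{lm_l}]$. Let $0\to F_p\to\cdots\to F_1\to F_0\to S/I\to 0$ be the $\mathbb{Z}^n$-graded minimal free resolution of $S/I$ with differential $\partial$, where $F_0=S$ with basis $f_{01}$ of degree $0$, and $F_i=\bigoplus_{j=1}^{\beta_i}Sf_{ij}$ with $f_{ij}$ homogeneous of multidegree $a_{ij}\in\mathbb{N}^n$; here $\beta_1=m$, $a_{1j}=a_j$ and $\partial(f_{1j})=x^{a_j}f_{01}$. Write $\partial(f_{ij})=\sum_k\lambda^{(i)}_{kj}x^{a_{ij}-a_{i-1,k}}f_{i-1,k}$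 with $\lambda^{(i)}_{kj}\in K$, where $\lambda^{(i)}_{kj}=0$ whenever $a_{ij}-a_{i-1,k}\notin\mathbb{N}^n$; the matrices $\lambda^{(i)}=(\lambda^{(i)}_{kj})\in K^{\beta_{i-1}\times\beta_i}$ are the scalar matrices ($\lambda^{(1)}=(1,\ldots,1)$). Given monomial ideals $L_1,\ldots,L_m$ of $T$, the complex $\mathbb{F}^*$ of $L_1,\ldots,L_m$ induced by $I$ is defined by $F^*_0=T$, $F^*_i=\bigoplus_{j=1}^{\beta_i}L_{ij}$ for $1\le i\le p$, where $L_{1j}=L_j$ and, for $i\ge2$, $L_{ij}=\bigcap_{k:\lambda^{(i)}_{kj}\neq0}L_{i-1,k}$; the differential $\partial^*:F^*_i\to F^*_{i-1}$ maps a column vector $u=(u_1,\ldots,u_{\beta_i})^T$, $u_j\in L_{ij}$, to $\lambda^{(i)}u$. *)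

theory Defs
  imports "HOL-Library.Poly_Mapping"
begin

type_synonym ('v, 'k) mpoly = "('v \<Rightarrow>\<^sub>0 nat) \<Rightarrow>\<^sub>0 'k"

definition monom :: "('v \<Rightarrow>\<^sub>0 nat) \<Rightarrow> ('v, 'k::zero_neq_one) mpoly" where
  "monom a = Poly_Mapping.single a 1"

definition const :: "'k::zero \<Rightarrow> ('v, 'k) mpoly" where
  "const c = Poly_Mapping.single 0 c"

(* componentwise order on exponent vectors: x^a divides x^b *)
definition mle :: "('v \<Rightarrow>\<^sub>0 nat) \<Rightarrow> ('v \<Rightarrow>\<^sub>0 nat) \<Rightarrow> bool" where
  "mle a b \<longleftrightarrow> (\<forall>l. Poly_Mapping.lookup a l \<le> Poly_Mapping.lookup b l)"

definition subring_vars :: "'v set \<Rightarrow> ('v, 'k::zero) mpoly set" where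
  "subring_vars V = {f. \<forall>a \<in> Poly_Mapping.keys f. Poly_Mapping.keys a \<subseteq> V}"

definition is_ideal_in :: "'a::comm_ring_1 set \<Rightarrow> 'a set \<Rightarrow> bool" where
  "is_ideal_in R J \<longleftrightarrow> J \<subseteq> R \<and> 0 \<in> J \<and> (\<forall>x\<in>J. \<forall>y\<in>J. x + y \<in> J)
      \<and> (\<forall>r\<in>R. \<forall>x\<in>J. r * x \<in> J)"

definition ideal_gen :: "'a::comm_ring_1 set \<Rightarrow> 'a set \<Rightarrow> 'a set" where
  "ideal_gen R G = \<Inter>{J. is_ideal_in R J \<and> G \<subseteq> J}"

definition monomial_ideal_in :: "'v set \<Rightarrow> ('v, 'k::comm_ring_1) mpoly set \<Rightarrow> bool" where
  "monomial_ideal_in V J \<longleftrightarrow> is_ideal_in (subring_vars V) J \<and>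
     (\<exists>M. (\<forall>a\<in>M. Poly_Mapping.keys a \<subseteq> V) \<and> J = ideal_gen (subring_vars V) (monom ` M))"

(* exponents of the minimal monomial generating set G(I) of a monomial ideal I *)
definition mingens :: "('v, 'k::comm_ring_1) mpoly set \<Rightarrow> ('v \<Rightarrow>\<^sub>0 nat) set" where
  "mingens I = {a. monom a \<in> I \<and> (\<forall>b. monom b \<in> I \<and> mle b a \<longrightarrow> b = a)}"

(* free module of rank b: vectors indexed by j < b *)
definition freemod :: "nat \<Rightarrow> (nat \<Rightarrow> 'a::zero) set" where
  "freemod b = {u. \<forall>j\<ge>b. u j = 0}"

(* differential \<partial>_i of the Z^n-graded free complex with basis degrees a i j and
   scalar matrices lam i k j:  \<partial>(f_ij) = \<Sum>_k lam i k j x^(a_ij - a_(i-1)k) f_(i-1)k *)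
definition dres :: "(nat \<Rightarrow> nat) \<Rightarrow> (nat \<Rightarrow> nat \<Rightarrow> ('v \<Rightarrow>\<^sub>0 nat)) \<Rightarrow> (nat \<Rightarrow> nat \<Rightarrow> nat \<Rightarrow> 'k::comm_ring_1)
     \<Rightarrow> nat \<Rightarrow> (nat \<Rightarrow> ('v, 'k) mpoly) \<Rightarrow> (nat \<Rightarrow> ('v, 'k) mpoly)" where
  "dres \<beta> a lam i u = (\<lambda>k. if k < \<beta> (i - 1)
      then (\<Sum>j<\<beta> i. const (lam i k j) * monom (a i j - a (i - 1) k) * u j) else 0)"

(* (p, \<beta>, a, lam) describe the Z^n-graded minimal free resolution
   0 \<rightarrow> F_p \<rightarrow> ... \<rightarrow> F_1 \<rightarrow> F_0 = S \<rightarrow> S/I \<rightarrow> 0 of S/I, with F_i = S^(\<beta> i) *)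
definition is_min_graded_res ::
  "('v, 'k::field) mpoly set \<Rightarrow> nat \<Rightarrow> (nat \<Rightarrow> nat) \<Rightarrow> (nat \<Rightarrow> nat \<Rightarrow> ('v \<Rightarrow>\<^sub>0 nat))
     \<Rightarrow> (nat \<Rightarrow> nat \<Rightarrow> nat \<Rightarrow> 'k) \<Rightarrow> bool" where
  "is_min_graded_res I p \<beta> a lam \<longleftrightarrow>
     \<beta> 0 = 1 \<and> a 0 0 = 0 \<and> (\<forall>i>p. \<beta> i = 0) \<and>
     (\<forall>i k j. 1 \<le> i \<and> j < \<beta> i \<and> k < \<beta> (i - 1) \<and> lam i k j \<noteq> 0 \<longrightarrow>
         mle (a (i - 1) k) (a i j) \<and> a (i - 1) k \<noteq> a i j) \<and>
     dres \<beta> a lam 1 ` freemod (\<beta> 1) = {u. u 0 \<in> I \<and> (\<forall>k\<ge>1. u k = 0)} \<and>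
     (\<forall>i. 1 \<le> i \<and> i \<le> p \<longrightarrow>
        {u \<in> freemod (\<beta> i). dres \<beta> a lam i u = (\<lambda>_. 0)} = dres \<beta> a lam (Suc i) ` freemod (\<beta> (Suc i)))"

fun Lind :: "(nat \<Rightarrow> nat) \<Rightarrow> (nat \<Rightarrow> nat \<Rightarrow> nat \<Rightarrow> 'k::zero) \<Rightarrow> (nat \<Rightarrow> 'a set) \<Rightarrow> nat \<Rightarrow> nat \<Rightarrow> 'a set" where
  "Lind \<beta> lam L 0 j = UNIV"
| "Lind \<beta> lam L (Suc 0) j = L j"
| "Lind \<beta> lam L (Suc (Suc i)) j =
     \<Inter>{Lind \<beta> lam L (Suc i) k | k. k < \<beta> (Suc i) \<and> lam (Suc (Suc i)) k j \<noteq> 0}"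

(* the module F*_i = \<Oplus>_j L_ij, as column vectors *)
definition Fstar :: "(nat \<Rightarrow> nat) \<Rightarrow> (nat \<Rightarrow> nat \<Rightarrow> nat \<Rightarrow> 'k::zero) \<Rightarrow> (nat \<Rightarrow> 'a::zero set) \<Rightarrow> nat
     \<Rightarrow> (nat \<Rightarrow> 'a) set" where
  "Fstar \<beta> lam L i = {u. (\<forall>j<\<beta> i. u j \<in> Lind \<beta> lam L i j) \<and> (\<forall>j\<ge>\<beta> i. u j = 0)}"

definition dstar :: "(nat \<Rightarrow> nat) \<Rightarrow> (nat \<Rightarrow> nat \<Rightarrow> nat \<Rightarrow> 'k::comm_ring_1) \<Rightarrow> nat
     \<Rightarrow> (nat \<Rightarrow> ('w, 'k) mpoly) \<Rightarrow> (nat \<Rightarrow> ('w, 'k) mpoly)" where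
  "dstar \<beta> lam i u = (\<lambda>k. if k < \<beta> (i - 1) then (\<Sum>j<\<beta> i. const (lam i k j) * u j) else 0)"

end

theory Submission
  imports Defs
begin

text \<open>Whether a monomial \<open>x^c\<close> of \<open>T\<close> lies in \<open>L_j\<close> depends only on \<open>c\<close> through one
  exponent vector \<open>B(c)\<close>: the block parts of \<open>c\<close> must lie in the factors
  \<open>L_{l,a_j(l)}\<close>, and since these factors shrink as the exponent grows this happens exactly
  when \<open>a_j \<le> B(c)\<close>, where \<open>B(c)_l\<close> is the largest admissible exponent.  By minimality of the
  resolution each degree \<open>a_ij\<close> is the least common multiple of the degrees in its column of
  \<open>\<lambda>^(i)\<close>, so the same description holds for every \<open>L_ij\<close> with \<open>a_ij\<close> in place of \<open>a_j\<close>.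
  Hence the coefficient of \<open>x^c\<close> in the complex \<open>F*\<close> is the strand of the \<open>\<int>^n\<close>-graded
  resolution in multidegree \<open>B(c)\<close>, a complex of \<open>K\<close>-vector spaces which is exact because the
  resolution is.\<close>

section \<open>Polynomials and exponent vectors\<close>

lemma const_0 [simp]: "const 0 = 0"
  by (simp add: const_def)

lemma const_1 [simp]: "const 1 = 1"
  by (simp add: const_def)

lemma lookup_const_mult:
  "Poly_Mapping.lookup (const x * (f :: ('v, 'k::comm_ring_1) mpoly)) c = x * Poly_Mapping.lookup f c"
proof -
  have "const x * f = Poly_Mapping.map ((*) x) f"
    by (simp add: const_def mult_map_scale_conv_mult)
  then show ?thesis
    by (simp add: Poly_Mapping.map.rep_eq when_def)
qed

lemma keys_const_mult_subset:
  "Poly_Mapping.keys (const x * (f :: ('v, 'k::comm_ring_1) mpoly)) \<subseteq> Poly_Mapping.keys f"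
  by (auto simp: in_keys_iff lookup_const_mult)

lemma const_mult_monom: "const x * monom c = (Poly_Mapping.single c x :: ('v, 'k::comm_ring_1) mpoly)"
  by (simp add: monom_def const_def mult_single)

lemma monom_add: "monom (a + b) = (monom a * monom b :: ('v, 'k::comm_ring_1) mpoly)"
  by (simp add: monom_def mult_single)

lemma keys_monom [simp]: "Poly_Mapping.keys (monom c :: ('v, 'k::zero_neq_one) mpoly) = {c}"
  by (simp add: monom_def)

lemma monom_sum:
  "finite S \<Longrightarrow> monom (sum f S) = (\<Prod>l\<in>S. monom (f l) :: ('v, 'k::comm_ring_1) mpoly)"
  by (induction S rule: finite_induct) (simp_all add: monom_add, simp add: monom_def)

lemma single_eq_0_iff [simp]: "Poly_Mapping.single d x = 0 \<longleftrightarrow> x = 0"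
  by (metis lookup_single_eq lookup_zero single_zero)

lemma sum_single: "(\<Sum>j\<in>A. Poly_Mapping.single d (f j)) = Poly_Mapping.single d (\<Sum>j\<in>A. f j)"
  by (induction A rule: infinite_finite_induct) (auto simp: single_add)

lemma poly_eq_sum_monoms:
  "(f :: ('v, 'k::comm_ring_1) mpoly) = (\<Sum>c\<in>Poly_Mapping.keys f. const (Poly_Mapping.lookup f c) * monom c)"
  by (rule poly_mapping_eqI) (auto simp: const_mult_monom lookup_sum lookup_single when_def in_keys_iff)

lemma keys_prod:
  assumes "finite S" and "c \<in> Poly_Mapping.keys (\<Prod>l\<in>S. f l :: ('v, 'k::comm_ring_1) mpoly)"
  shows "\<exists>cs. (\<forall>l\<in>S. cs l \<in> Poly_Mapping.keys (f l)) \<and> c = (\<Sum>l\<in>S. cs l)"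
  using assms
proof (induction S arbitrary: c rule: finite_induct)
  case (insert x F)
  then obtain a b where ab: "a \<in> Poly_Mapping.keys (f x)" "b \<in> Poly_Mapping.keys (\<Prod>l\<in>F. f l)" "c = a + b"
    using keys_mult by (simp, blast)
  obtain cs where cs: "\<forall>l\<in>F. cs l \<in> Poly_Mapping.keys (f l)" "b = (\<Sum>l\<in>F. cs l)"
    using insert.IH ab(2) by blast
  have "(\<Sum>l\<in>F. (cs(x := a)) l) = (\<Sum>l\<in>F. cs l)"
    using insert.hyps(2) by (intro sum.cong) auto
  then show ?case
    using ab cs insert.hyps by (intro exI[of _ "cs(x := a)"]) auto
qed simp

definition poly_of_coeffs :: "('v \<Rightarrow>\<^sub>0 nat) set \<Rightarrow> (('v \<Rightarrow>\<^sub>0 nat) \<Rightarrow> 'k::zero) \<Rightarrow> ('v, 'k) mpoly" where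
  "poly_of_coeffs K f = Abs_poly_mapping (\<lambda>c. if c \<in> K then f c else 0)"

lemma lookup_poly_of_coeffs:
  assumes "finite K"
  shows "Poly_Mapping.lookup (poly_of_coeffs K f) c = (if c \<in> K then f c else 0)"
proof -
  have "finite {c. (if c \<in> K then f c else 0) \<noteq> 0}"
    by (rule finite_subset[OF _ assms]) auto
  then show ?thesis
    by (simp add: poly_of_coeffs_def)
qed

lemma mle_refl [simp]: "mle x x"
  by (simp add: mle_def)

lemma mle_trans: "mle x y \<Longrightarrow> mle y z \<Longrightarrow> mle x z"
  unfolding mle_def using le_trans by blast

lemma mle_antisym: "mle x y \<Longrightarrow> mle y x \<Longrightarrow> x = y"
  unfolding mle_def by (rule poly_mapping_eqI) (meson antisym)

lemma add_diff_cancel_mle: "mle d c \<Longrightarrow> d + (c - d) = (c :: 'v \<Rightarrow>\<^sub>0 nat)"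
  by (rule poly_mapping_eqI) (simp add: mle_def lookup_add lookup_minus)

lemma diff_add_diff_mle: "mle x y \<Longrightarrow> mle y z \<Longrightarrow> (y - x) + (z - y) = (z - x :: 'v \<Rightarrow>\<^sub>0 nat)"
  by (rule poly_mapping_eqI) (simp add: mle_def lookup_add lookup_minus le_diff_conv2)

lemma mle_diff_iff: "mle a x \<Longrightarrow> mle a y \<Longrightarrow> mle (x - a) (y - a) \<longleftrightarrow> mle x (y :: 'v \<Rightarrow>\<^sub>0 nat)"
  unfolding mle_def by (auto simp: lookup_minus) (metis diff_le_mono2 le_diff_iff)+

lemma diff_diff_mle: "mle a x \<Longrightarrow> mle x y \<Longrightarrow> (y - a) - (x - a) = (y - x :: 'v \<Rightarrow>\<^sub>0 nat)"
  unfolding mle_def by (rule poly_mapping_eqI) (simp add: lookup_minus)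

lemma lookup_monom_mult:
  "Poly_Mapping.lookup (monom d * (f :: ('v, 'k::comm_ring_1) mpoly)) c =
     (if mle d c then Poly_Mapping.lookup f (c - d) else 0)"
proof -
  have "Poly_Mapping.lookup (monom d * f) c = (\<Sum>q. Poly_Mapping.lookup f q when c = d + q)"
    by (simp add: lookup_mult monom_def lookup_single when_mult)
  moreover have "c = d + q \<longleftrightarrow> mle d c \<and> q = c - d" for q
    by (auto simp: mle_def lookup_add add_diff_cancel_mle)
  ultimately show ?thesis
    by (simp add: when_def)
qed

section \<open>Strands of a minimal graded resolution\<close>

locale min_graded_res =
  fixes I :: "('v, 'k::field) mpoly set" and p :: nat and \<beta> :: "nat \<Rightarrow> nat"
    and a :: "nat \<Rightarrow> nat \<Rightarrow> ('v \<Rightarrow>\<^sub>0 nat)" and lam :: "nat \<Rightarrow> nat \<Rightarrow> nat \<Rightarrow> 'k"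
  assumes res: "is_min_graded_res I p \<beta> a lam"
begin

lemma beta_0: "\<beta> 0 = 1"
  using res by (simp add: is_min_graded_res_def)

lemma le_p_if_beta_pos: "j < \<beta> i \<Longrightarrow> i \<le> p"
  using res by (metis is_min_graded_res_def not_le not_less0)

lemma lam_nonzero_degree:
  "1 \<le> i \<Longrightarrow> j < \<beta> i \<Longrightarrow> k < \<beta> (i - 1) \<Longrightarrow> lam i k j \<noteq> 0 \<Longrightarrow>
     mle (a (i - 1) k) (a i j) \<and> a (i - 1) k \<noteq> a i j"
  using res unfolding is_min_graded_res_def by blast

lemma res_exact:
  "1 \<le> i \<Longrightarrow> i \<le> p \<Longrightarrow>
     {u \<in> freemod (\<beta> i). dres \<beta> a lam i u = (\<lambda>_. 0)} = dres \<beta> a lam (Suc i) ` freemod (\<beta> (Suc i))"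
  using res unfolding is_min_graded_res_def by blast

lemma dres_homogeneous:
  assumes i: "1 \<le> i" and k: "k < \<beta> (i - 1)"
    and v: "\<And>j. v j \<noteq> 0 \<Longrightarrow> j < \<beta> i \<and> mle (a i j) b"
  shows "dres \<beta> a lam i (\<lambda>j. Poly_Mapping.single (b - a i j) (v j)) k =
           Poly_Mapping.single (b - a (i - 1) k) (\<Sum>j<\<beta> i. lam i k j * v j)"
proof -
  have "const (lam i k j) * monom (a i j - a (i - 1) k) * Poly_Mapping.single (b - a i j) (v j)
          = Poly_Mapping.single (b - a (i - 1) k) (lam i k j * v j)" if j: "j < \<beta> i" for j
  proof (cases "lam i k j * v j = 0")
    case False
    then have "mle (a (i - 1) k) (a i j)" and "mle (a i j) b"
      using lam_nonzero_degree[OF i j k] v by auto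
    then show ?thesis
      by (simp add: const_mult_monom mult_single diff_add_diff_mle)
  qed auto
  then show ?thesis
    using k by (simp add: dres_def sum_single)
qed

lemma lookup_dres_Suc:
  assumes j: "j < \<beta> i" and b: "mle (a i j) b"
  shows "Poly_Mapping.lookup (dres \<beta> a lam (Suc i) w j) (b - a i j) =
     (\<Sum>j'<\<beta> (Suc i). lam (Suc i) j j' *
        (if mle (a (Suc i) j') b then Poly_Mapping.lookup (w j') (b - a (Suc i) j') else 0))"
proof -
  have "Poly_Mapping.lookup (dres \<beta> a lam (Suc i) w j) (b - a i j) =
     (\<Sum>j'<\<beta> (Suc i). lam (Suc i) j j' *
        (if mle (a (Suc i) j' - a i j) (b - a i j)
         then Poly_Mapping.lookup (w j') (b - a i j - (a (Suc i) j' - a i j)) else 0))"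
    using j by (simp add: dres_def lookup_sum mult.assoc lookup_const_mult lookup_monom_mult)
  also have "\<dots> = (\<Sum>j'<\<beta> (Suc i). lam (Suc i) j j' *
        (if mle (a (Suc i) j') b then Poly_Mapping.lookup (w j') (b - a (Suc i) j') else 0))"
  proof (rule sum.cong)
    fix j' assume j': "j' \<in> {..<\<beta> (Suc i)}"
    show "lam (Suc i) j j' *
          (if mle (a (Suc i) j' - a i j) (b - a i j)
           then Poly_Mapping.lookup (w j') (b - a i j - (a (Suc i) j' - a i j)) else 0)
        = lam (Suc i) j j' *
          (if mle (a (Suc i) j') b then Poly_Mapping.lookup (w j') (b - a (Suc i) j') else 0)"
    proof (cases "lam (Suc i) j j' = 0")
      case False
      then have "mle (a i j) (a (Suc i) j')"
        using lam_nonzero_degree[of "Suc i" j' j] j j' by simp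
      then show ?thesis
        using b by (simp add: mle_diff_iff diff_diff_mle)
    qed simp
  qed simp
  finally show ?thesis .
qed

text \<open>The multidegree-\<open>b\<close> part of the resolution is an exact complex of \<open>K\<close>-vector spaces
  with the scalar matrices as differentials; \<open>v\<close> and \<open>w\<close> are coefficient vectors there.\<close>

lemma strand_exact:
  assumes i: "1 \<le> i" "i \<le> p"
    and v: "\<And>j. v j \<noteq> 0 \<Longrightarrow> j < \<beta> i \<and> mle (a i j) b"
    and cycle: "\<And>k. k < \<beta> (i - 1) \<Longrightarrow> (\<Sum>j<\<beta> i. lam i k j * v j) = 0"
  obtains w where "\<And>j'. w j' \<noteq> 0 \<Longrightarrow> j' < \<beta> (Suc i) \<and> mle (a (Suc i) j') b"
    and "\<And>j. j < \<beta> i \<Longrightarrow> v j = (\<Sum>j'<\<beta> (Suc i). lam (Suc i) j j' * w j')"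
proof -
  define u where "u j = Poly_Mapping.single (b - a i j) (v j)" for j
  have "u \<in> freemod (\<beta> i)"
    using v by (auto simp: u_def freemod_def) (metis leD single_zero)
  moreover have "dres \<beta> a lam i u = (\<lambda>_. 0)"
    using dres_homogeneous[OF i(1) _ v] cycle by (auto simp: u_def dres_def)
  ultimately obtain W where W: "W \<in> freemod (\<beta> (Suc i))" and u_W: "u = dres \<beta> a lam (Suc i) W"
    using res_exact[OF i] by blast
  define w where
    "w j' = (if mle (a (Suc i) j') b then Poly_Mapping.lookup (W j') (b - a (Suc i) j') else 0)" for j'
  show thesis
  proof
    show "j' < \<beta> (Suc i) \<and> mle (a (Suc i) j') b" if "w j' \<noteq> 0" for j'
      using that W by (auto simp: w_def freemod_def split: if_splits) (metis lookup_zero not_le)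
    show "v j = (\<Sum>j'<\<beta> (Suc i). lam (Suc i) j j' * w j')" if j: "j < \<beta> i" for j
    proof (cases "mle (a i j) b")
      case True
      have "v j = Poly_Mapping.lookup (u j) (b - a i j)"
        by (simp add: u_def)
      then show ?thesis
        using lookup_dres_Suc[OF j True] by (simp add: u_W w_def)
    next
      case False
      have "lam (Suc i) j j' * w j' = 0" if j': "j' < \<beta> (Suc i)" for j'
      proof (rule ccontr)
        assume "lam (Suc i) j j' * w j' \<noteq> 0"
        then have "mle (a i j) (a (Suc i) j')" and "mle (a (Suc i) j') b"
          using lam_nonzero_degree[of "Suc i" j' j] j j' by (auto simp: w_def split: if_splits)
        then show False
          using False mle_trans by blast
      qed
      then show ?thesis
        using v False by (metis (no_types, lifting) lessThan_iff sum.neutral)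
    qed
  qed
qed

lemma lam_mult_lam:
  assumes i: "1 \<le> i" "i \<le> p" and j: "j < \<beta> (Suc i)" and k: "k < \<beta> (i - 1)"
  shows "(\<Sum>k'<\<beta> i. lam i k k' * lam (Suc i) k' j) = 0"
proof -
  let ?b = "a (Suc i) j" and ?e = "\<lambda>j'. if j' = j then 1 else 0 :: 'k"
  define col where "col k' = (if k' < \<beta> i then lam (Suc i) k' j else 0)" for k'
  define E where "E j' = Poly_Mapping.single (?b - a (Suc i) j') (?e j')" for j'
  have E_free: "E \<in> freemod (\<beta> (Suc i))"
    using j by (auto simp: freemod_def E_def)
  have dres_E: "dres \<beta> a lam (Suc i) E = (\<lambda>k'. Poly_Mapping.single (?b - a i k') (col k'))"
  proof
    fix k'
    show "dres \<beta> a lam (Suc i) E k' = Poly_Mapping.single (?b - a i k') (col k')"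
    proof (cases "k' < \<beta> i")
      case True
      have "dres \<beta> a lam (Suc i) E k' =
              Poly_Mapping.single (?b - a i k') (\<Sum>j'<\<beta> (Suc i). lam (Suc i) k' j' * ?e j')"
        unfolding E_def
        by (rule dres_homogeneous[of "Suc i" k' ?e ?b, unfolded diff_Suc_1])
          (use j True in \<open>auto split: if_splits\<close>)
      also have "\<dots> = Poly_Mapping.single (?b - a i k') (col k')"
        using j True by (simp add: col_def if_distrib cong: if_cong)
      finally show ?thesis .
    qed (simp add: col_def dres_def)
  qed
  have "dres \<beta> a lam i (dres \<beta> a lam (Suc i) E) = (\<lambda>_. 0)"
    using res_exact[OF i] E_free by blast
  then have "dres \<beta> a lam i (\<lambda>k'. Poly_Mapping.single (?b - a i k') (col k')) k = 0"
    by (simp add: dres_E)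
  moreover have "col k' \<noteq> 0 \<Longrightarrow> k' < \<beta> i \<and> mle (a i k') ?b" for k'
    using lam_nonzero_degree[of "Suc i" j k'] j by (auto simp: col_def split: if_splits)
  ultimately have "Poly_Mapping.single (?b - a (i - 1) k) (\<Sum>k'<\<beta> i. lam i k k' * col k') = 0"
    using dres_homogeneous[OF i(1) k, of col ?b] by simp
  then show ?thesis
    by (simp add: col_def)
qed

text \<open>Minimality: a cycle of the strand in degree \<open>a i j\<close> has no component at \<open>j\<close>, since the
  boundaries reaching \<open>j\<close> come from strictly larger degrees.\<close>

lemma strand_cycle_vanishes_at_top:
  assumes i: "1 \<le> i" and j: "j < \<beta> i"
    and v: "\<And>j'. v j' \<noteq> 0 \<Longrightarrow> j' < \<beta> i \<and> mle (a i j') (a i j)"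
    and cycle: "\<And>k. k < \<beta> (i - 1) \<Longrightarrow> (\<Sum>j'<\<beta> i. lam i k j' * v j') = 0"
  shows "v j = 0"
proof -
  obtain w where w: "\<And>j'. w j' \<noteq> 0 \<Longrightarrow> j' < \<beta> (Suc i) \<and> mle (a (Suc i) j') (a i j)"
    and v_w: "\<And>j. j < \<beta> i \<Longrightarrow> v j = (\<Sum>j'<\<beta> (Suc i). lam (Suc i) j j' * w j')"
    using strand_exact[OF i le_p_if_beta_pos[OF j] v cycle] by blast
  have "lam (Suc i) j j' * w j' = 0" if j': "j' < \<beta> (Suc i)" for j'
  proof (rule ccontr)
    assume "lam (Suc i) j j' * w j' \<noteq> 0"
    then have "mle (a i j) (a (Suc i) j') \<and> a i j \<noteq> a (Suc i) j'" and "mle (a (Suc i) j') (a i j)"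
      using lam_nonzero_degree[of "Suc i" j' j] j j' w by auto
    then show False
      using mle_antisym by blast
  qed
  then show ?thesis
    using v_w[OF j] by (simp add: sum.neutral)
qed

lemma lam_column_nonzero:
  assumes i: "1 \<le> i" and j: "j < \<beta> (Suc i)"
  shows "\<exists>k<\<beta> i. lam (Suc i) k j \<noteq> 0"
proof (rule ccontr)
  assume column_zero: "\<not> (\<exists>k<\<beta> i. lam (Suc i) k j \<noteq> 0)"
  have "(if j = j then 1 else 0 :: 'k) = 0"
  proof (rule strand_cycle_vanishes_at_top[of "Suc i" j "\<lambda>j'. if j' = j then 1 else 0"])
    show "(\<Sum>j'<\<beta> (Suc i). lam (Suc i) k j' * (if j' = j then 1 else 0)) = 0"
      if "k < \<beta> (Suc i - 1)" for k
      using j that column_zero by (simp add: if_distrib cong: if_cong)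
  qed (use j in \<open>auto split: if_splits\<close>)
  then show False
    by simp
qed

text \<open>Minimality again: \<open>a (Suc i) j\<close> is the least common multiple of the degrees
  \<open>a i k\<close> of its column of the scalar matrix.\<close>

lemma degree_le_if_column_degrees_le:
  assumes i: "1 \<le> i" and j: "j < \<beta> (Suc i)"
    and b: "\<And>k. k < \<beta> i \<Longrightarrow> lam (Suc i) k j \<noteq> 0 \<Longrightarrow> mle (a i k) b"
  shows "mle (a (Suc i) j) b"
proof (rule ccontr)
  assume not_le_b: "\<not> mle (a (Suc i) j) b"
  define c where
    "c = Abs_poly_mapping (\<lambda>l. min (Poly_Mapping.lookup (a (Suc i) j) l) (Poly_Mapping.lookup b l))"
  have "finite {l. min (Poly_Mapping.lookup (a (Suc i) j) l) (Poly_Mapping.lookup b l) \<noteq> 0}"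
    by (rule finite_subset[of _ "Poly_Mapping.keys (a (Suc i) j)"]) (auto simp: in_keys_iff)
  then have lookup_c: "Poly_Mapping.lookup c l =
      min (Poly_Mapping.lookup (a (Suc i) j) l) (Poly_Mapping.lookup b l)" for l
    by (simp add: c_def)
  have c_le: "mle c (a (Suc i) j)" "mle c b"
    by (auto simp: mle_def lookup_c)
  have le_c: "mle x c" if "mle x (a (Suc i) j)" "mle x b" for x
    using that by (auto simp: mle_def lookup_c)
  define col where "col k = (if k < \<beta> i then lam (Suc i) k j else 0)" for k
  have col_supp: "k < \<beta> i \<and> mle (a i k) c" if "col k \<noteq> 0" for k
    using that lam_nonzero_degree[of "Suc i" j k] j b le_c by (auto simp: col_def split: if_splits)
  have col_cycle: "(\<Sum>k<\<beta> i. lam i k' k * col k) = 0" if "k' < \<beta> (i - 1)" for k'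
    using lam_mult_lam[OF i Suc_leD[OF le_p_if_beta_pos[OF j]] j that] by (simp add: col_def)
  obtain w where w: "\<And>j'. w j' \<noteq> 0 \<Longrightarrow> j' < \<beta> (Suc i) \<and> mle (a (Suc i) j') c"
    and col_w: "\<And>k. k < \<beta> i \<Longrightarrow> col k = (\<Sum>j'<\<beta> (Suc i). lam (Suc i) k j' * w j')"
    using strand_exact[OF i Suc_leD[OF le_p_if_beta_pos[OF j]] col_supp col_cycle] by blast
  have "w j = 0"
    using w[of j] not_le_b c_le(2) mle_trans by blast
  have "(if j = j then 1 else 0) - w j = (0 :: 'k)"
  proof (rule strand_cycle_vanishes_at_top[of "Suc i" j "\<lambda>j'. (if j' = j then 1 else 0) - w j'"])
    show "j' < \<beta> (Suc i) \<and> mle (a (Suc i) j') (a (Suc i) j)"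
      if "(if j' = j then 1 else 0) - w j' \<noteq> 0" for j'
      using that w[of j'] j c_le(1) mle_trans by (auto split: if_splits)
    show "(\<Sum>j'<\<beta> (Suc i). lam (Suc i) k j' * ((if j' = j then 1 else 0) - w j')) = 0"
      if k: "k < \<beta> (Suc i - 1)" for k
    proof -
      have "lam (Suc i) k j' * ((if j' = j then 1 else 0) - w j') =
              (if j' = j then lam (Suc i) k j' else 0) - lam (Suc i) k j' * w j'" for j'
        by (simp add: right_diff_distrib)
      then show ?thesis
        using j k col_w[of k] by (simp add: sum_subtractf col_def)
    qed
  qed (use i j in auto)
  then show False
    using \<open>w j = 0\<close> by simp
qed

lemma mle_degree_iff_column_degrees:
  assumes "1 \<le> i" and j: "j < \<beta> (Suc i)"
  shows "mle (a (Suc i) j) b \<longleftrightarrow> (\<forall>k<\<beta> i. lam (Suc i) k j \<noteq> 0 \<longrightarrow> mle (a i k) b)"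
proof (intro iffI allI impI)
  fix k assume b: "mle (a (Suc i) j) b" and k: "k < \<beta> i" "lam (Suc i) k j \<noteq> 0"
  then have "mle (a i k) (a (Suc i) j)"
    using lam_nonzero_degree[of "Suc i" j k] j by simp
  then show "mle (a i k) b"
    using b mle_trans by blast
qed (use degree_le_if_column_degrees_le[OF assms] in blast)

end

section \<open>Monomial ideals\<close>

lemma ideal_gen_superset: "G \<subseteq> ideal_gen R G"
  unfolding ideal_gen_def by blast

lemma ideal_gen_least: "is_ideal_in R J \<Longrightarrow> G \<subseteq> J \<Longrightarrow> ideal_gen R G \<subseteq> J"
  unfolding ideal_gen_def by blast

lemma is_ideal_in_ideal_gen_UNIV: "is_ideal_in UNIV (ideal_gen UNIV G)"
  unfolding ideal_gen_def is_ideal_in_def by blast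

lemma ideal_gen_UNIV_mult: "x \<in> ideal_gen UNIV G \<Longrightarrow> r * x \<in> ideal_gen UNIV G"
  using is_ideal_in_ideal_gen_UNIV unfolding is_ideal_in_def by blast

lemma is_ideal_in_sum: "is_ideal_in R J \<Longrightarrow> (\<And>x. x \<in> A \<Longrightarrow> g x \<in> J) \<Longrightarrow> sum g A \<in> J"
  by (induction A rule: infinite_finite_induct) (simp_all add: is_ideal_in_def)

lemma ideal_gen_UN_eq_sums:
  fixes m :: nat
  assumes J: "\<And>j. j < m \<Longrightarrow> is_ideal_in UNIV (J j)"
  shows "ideal_gen UNIV (\<Union>j<m. J j) = {\<Sum>j<m. u j | u. \<forall>j<m. u j \<in> J j}"
    (is "_ = ?sums")
proof
  have "is_ideal_in UNIV ?sums"
    unfolding is_ideal_in_def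
  proof (intro conjI ballI)
    show "0 \<in> ?sums"
      using J by (intro CollectI exI[of _ "\<lambda>_. 0"]) (simp add: is_ideal_in_def)
    show "x + y \<in> ?sums" if x: "x \<in> ?sums" and y: "y \<in> ?sums" for x y
    proof -
      obtain u where "x = (\<Sum>j<m. u j)" "\<forall>j<m. u j \<in> J j"
        using x by blast
      moreover obtain v where "y = (\<Sum>j<m. v j)" "\<forall>j<m. v j \<in> J j"
        using y by blast
      ultimately show ?thesis
        using J by (intro CollectI exI[of _ "\<lambda>j. u j + v j"]) (simp add: is_ideal_in_def sum.distrib)
    qed
    show "r * x \<in> ?sums" if x: "x \<in> ?sums" for r x
    proof -
      obtain u where "x = (\<Sum>j<m. u j)" "\<forall>j<m. u j \<in> J j"
        using x by blast
      then show ?thesis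
        using J by (intro CollectI exI[of _ "\<lambda>j. r * u j"]) (simp add: is_ideal_in_def sum_distrib_left)
    qed
  qed simp
  moreover have "(\<Union>j<m. J j) \<subseteq> ?sums"
  proof
    fix x assume "x \<in> (\<Union>j<m. J j)"
    then obtain j0 where j0: "j0 < m" "x \<in> J j0"
      by blast
    then show "x \<in> ?sums"
      using J by (intro CollectI exI[of _ "\<lambda>j. if j = j0 then x else 0"])
        (simp add: is_ideal_in_def sum.delta)
  qed
  ultimately show "ideal_gen UNIV (\<Union>j<m. J j) \<subseteq> ?sums"
    by (rule ideal_gen_least)
  show "?sums \<subseteq> ideal_gen UNIV (\<Union>j<m. J j)"
  proof
    fix x assume "x \<in> ?sums"
    then obtain u where "x = (\<Sum>j<m. u j)" "\<forall>j<m. u j \<in> J j"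
      by blast
    then show "x \<in> ideal_gen UNIV (\<Union>j<m. J j)"
      using ideal_gen_superset[of "\<Union>j<m. J j" UNIV]
      by (auto intro!: is_ideal_in_sum[OF is_ideal_in_ideal_gen_UNIV])
  qed
qed

definition supported_in :: "(('v \<Rightarrow>\<^sub>0 nat) \<Rightarrow> bool) \<Rightarrow> ('v, 'k::zero) mpoly set" where
  "supported_in Q = {f. \<forall>c\<in>Poly_Mapping.keys f. Q c}"

lemma is_ideal_in_supported_in:
  assumes "\<And>c d. Q c \<Longrightarrow> Q (d + c)"
  shows "is_ideal_in UNIV (supported_in Q :: ('v, 'k::comm_ring_1) mpoly set)"
  unfolding is_ideal_in_def
proof (intro conjI ballI)
  show "x + y \<in> supported_in Q" if "x \<in> supported_in Q" "y \<in> supported_in Q" for x y :: "('v, 'k) mpoly"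
    using that keys_add[of x y] by (auto simp: supported_in_def)
  show "r * x \<in> supported_in Q" if "x \<in> supported_in Q" for r x :: "('v, 'k) mpoly"
    using that keys_mult[of r x] assms by (auto simp: supported_in_def)
qed (auto simp: supported_in_def)

lemma Inter_supported_in:
  "A \<noteq> {} \<Longrightarrow> \<Inter> ((\<lambda>k. supported_in (P k)) ` A) = supported_in (\<lambda>c. \<forall>k\<in>A. P k c)"
  by (auto simp: supported_in_def)

lemma subring_vars_mult:
  fixes f g :: "('v, 'k::comm_ring_1) mpoly"
  assumes "f \<in> subring_vars V" "g \<in> subring_vars V"
  shows "f * g \<in> subring_vars V"
proof -
  have "Poly_Mapping.keys (c + d) \<subseteq> Poly_Mapping.keys c \<union> Poly_Mapping.keys (d :: 'v \<Rightarrow>\<^sub>0 nat)" for c d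
    by (auto simp: in_keys_iff lookup_add)
  then show ?thesis
    using assms keys_mult[of f g] unfolding subring_vars_def by blast
qed

lemma monom_in_subring_vars:
  "Poly_Mapping.keys c \<subseteq> V \<Longrightarrow> (monom c :: ('v, 'k::comm_ring_1) mpoly) \<in> subring_vars V"
  by (simp add: subring_vars_def)

lemma is_ideal_in_divisible:
  "is_ideal_in (subring_vars V)
     ({f \<in> subring_vars V. \<forall>c\<in>Poly_Mapping.keys f. \<exists>d\<in>M. mle d c} :: ('v, 'k::comm_ring_1) mpoly set)"
  unfolding is_ideal_in_def
proof (intro conjI ballI)
  show "r * x \<in> {f \<in> subring_vars V. \<forall>c\<in>Poly_Mapping.keys f. \<exists>d\<in>M. mle d c}"
    if r: "r \<in> subring_vars V" and x: "x \<in> {f \<in> subring_vars V. \<forall>c\<in>Poly_Mapping.keys f. \<exists>d\<in>M. mle d c}"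
    for r x :: "('v, 'k) mpoly"
  proof -
    have "\<exists>d\<in>M. mle d e" if e: "e \<in> Poly_Mapping.keys (r * x)" for e
    proof -
      obtain c c' where "c' \<in> Poly_Mapping.keys x" "e = c + c'"
        using keys_mult[of r x] e by blast
      moreover obtain d where "d \<in> M" "mle d c'"
        using x \<open>c' \<in> _\<close> by blast
      ultimately show ?thesis
        by (auto simp: mle_def lookup_add intro: trans_le_add2)
    qed
    then show ?thesis
      using subring_vars_mult[OF r] x by blast
  qed
next
  show "x + y \<in> {f \<in> subring_vars V. \<forall>c\<in>Poly_Mapping.keys f. \<exists>d\<in>M. mle d c}"
    if "x \<in> {f \<in> subring_vars V. \<forall>c\<in>Poly_Mapping.keys f. \<exists>d\<in>M. mle d c}"
      and "y \<in> {f \<in> subring_vars V. \<forall>c\<in>Poly_Mapping.keys f. \<exists>d\<in>M. mle d c}"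
    for x y :: "('v, 'k) mpoly"
    using that keys_add[of x y] unfolding subring_vars_def by blast
qed (auto simp: subring_vars_def)

lemma monomial_ideal_keys:
  fixes J :: "('v, 'k::comm_ring_1) mpoly set"
  shows "monomial_ideal_in V J \<Longrightarrow> f \<in> J \<Longrightarrow> c \<in> Poly_Mapping.keys f \<Longrightarrow> Poly_Mapping.keys c \<subseteq> V"
  by (auto simp: monomial_ideal_in_def is_ideal_in_def subring_vars_def)

lemma monomial_ideal_monom_mult:
  fixes J :: "('v, 'k::comm_ring_1) mpoly set"
  assumes "monomial_ideal_in V J" and "monom c \<in> J" and "Poly_Mapping.keys d \<subseteq> V"
  shows "monom (d + c) \<in> J"
proof -
  have "is_ideal_in (subring_vars V) J"
    using assms(1) by (simp add: monomial_ideal_in_def)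
  then have "monom d * monom c \<in> J"
    using assms(2) monom_in_subring_vars[OF assms(3)] unfolding is_ideal_in_def by blast
  then show ?thesis
    by (simp add: monom_add)
qed

lemma monomial_ideal_monom_mem:
  fixes J :: "('v, 'k::comm_ring_1) mpoly set"
  assumes J: "monomial_ideal_in V J" and f: "f \<in> J" and c: "c \<in> Poly_Mapping.keys f"
  shows "monom c \<in> J"
proof -
  obtain M where M_V: "\<forall>d\<in>M. Poly_Mapping.keys d \<subseteq> V"
    and J_M: "J = ideal_gen (subring_vars V) (monom ` M)"
    using J unfolding monomial_ideal_in_def by blast
  have "(monom ` M :: ('v, 'k) mpoly set) \<subseteq> {f \<in> subring_vars V. \<forall>c\<in>Poly_Mapping.keys f. \<exists>d\<in>M. mle d c}"
    using M_V by (auto simp: monom_in_subring_vars) (meson mle_refl)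
  then have "J \<subseteq> {f \<in> subring_vars V. \<forall>c\<in>Poly_Mapping.keys f. \<exists>d\<in>M. mle d c}"
    unfolding J_M by (rule ideal_gen_least[OF is_ideal_in_divisible])
  then obtain d where d: "d \<in> M" "mle d c"
    using f c by auto
  have "monom d \<in> J"
    unfolding J_M using d(1) ideal_gen_superset[of "monom ` M" "subring_vars V"] by blast
  moreover have "Poly_Mapping.keys (c - d) \<subseteq> V"
    using monomial_ideal_keys[OF J f c] by (auto simp: in_keys_iff lookup_minus)
  ultimately have "monom (c - d + d) \<in> J"
    by (rule monomial_ideal_monom_mult[OF J])
  moreover have "c - d + d = c"
    by (metis add.commute add_diff_cancel_mle d(2))
  ultimately show ?thesis
    by simp
qed

section \<open>Products of monomial ideals in disjoint sets of variables\<close>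

definition exp_part :: "('w \<Rightarrow> 'v) \<Rightarrow> 'v \<Rightarrow> ('w \<Rightarrow>\<^sub>0 nat) \<Rightarrow> ('w \<Rightarrow>\<^sub>0 nat)" where
  "exp_part g l c = Abs_poly_mapping (\<lambda>w. if g w = l then Poly_Mapping.lookup c w else 0)"

lemma lookup_exp_part:
  "Poly_Mapping.lookup (exp_part g l c) w = (if g w = l then Poly_Mapping.lookup c w else 0)"
proof -
  have "finite {w. (if g w = l then Poly_Mapping.lookup c w else 0) \<noteq> 0}"
    by (rule finite_subset[of _ "Poly_Mapping.keys c"]) (auto simp: in_keys_iff)
  then show ?thesis
    by (simp add: exp_part_def)
qed

lemma exp_part_add: "exp_part g l (c + d) = exp_part g l c + exp_part g l d"
  by (rule poly_mapping_eqI) (simp add: lookup_exp_part lookup_add)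

lemma exp_part_sum: "exp_part g l (sum f S) = (\<Sum>x\<in>S. exp_part g l (f x))"
proof (induction S rule: infinite_finite_induct)
  case empty
  show ?case
    by (rule poly_mapping_eqI) (simp add: lookup_exp_part)
qed (simp_all add: exp_part_add, rule poly_mapping_eqI, simp add: lookup_exp_part)

lemma keys_exp_part: "Poly_Mapping.keys (exp_part g l c) \<subseteq> {w. g w = l}"
  by (auto simp: in_keys_iff lookup_exp_part split: if_splits)

lemma exp_part_eq_self: "Poly_Mapping.keys c \<subseteq> {w. g w = l} \<Longrightarrow> exp_part g l c = c"
  by (rule poly_mapping_eqI) (auto simp: lookup_exp_part in_keys_iff)

lemma exp_part_eq_0: "Poly_Mapping.keys c \<subseteq> {w. g w = l'} \<Longrightarrow> l \<noteq> l' \<Longrightarrow> exp_part g l c = 0"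
  by (rule poly_mapping_eqI) (auto simp: lookup_exp_part in_keys_iff)

lemma sum_exp_part: "(\<Sum>l\<in>(UNIV :: 'v::finite set). exp_part g l c) = c"
  by (rule poly_mapping_eqI) (simp add: lookup_sum lookup_exp_part)

context
  fixes grp :: "'w \<Rightarrow> 'v::finite" and J :: "'v \<Rightarrow> ('w, 'k::comm_ring_1) mpoly set"
  assumes monomial_J: "\<And>l. monomial_ideal_in {w. grp w = l} (J l)"
begin

lemma prod_mem_supported_in:
  assumes f: "\<And>l. f l \<in> J l"
  shows "(\<Prod>l\<in>UNIV. f l) \<in> supported_in (\<lambda>c. \<forall>l. monom (exp_part grp l c) \<in> J l)"
  unfolding supported_in_def
proof (intro CollectI ballI allI)
  fix c l assume "c \<in> Poly_Mapping.keys (\<Prod>l\<in>UNIV. f l)"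
  then obtain cs where cs: "\<And>l. cs l \<in> Poly_Mapping.keys (f l)" and c: "c = (\<Sum>l\<in>UNIV. cs l)"
    using keys_prod[of UNIV c f] by auto
  have cs_vars: "Poly_Mapping.keys (cs l') \<subseteq> {w. grp w = l'}" for l'
    using monomial_ideal_keys[OF monomial_J f cs] .
  have "exp_part grp l c = (\<Sum>l'\<in>UNIV. if l' = l then cs l else 0)"
    unfolding c exp_part_sum
    by (rule sum.cong) (auto simp: exp_part_eq_self[OF cs_vars] exp_part_eq_0[OF cs_vars])
  then show "monom (exp_part grp l c) \<in> J l"
    using monomial_ideal_monom_mem[OF monomial_J f cs] by simp
qed

lemma ideal_gen_products_eq:
  "ideal_gen UNIV {\<Prod>l\<in>UNIV. f l | f. \<forall>l. f l \<in> J l} =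
     supported_in (\<lambda>c. \<forall>l. monom (exp_part grp l c) \<in> J l)"
    (is "ideal_gen UNIV ?P = supported_in ?Q")
proof
  have "?Q (d + c)" if "?Q c" for c d
    using that monomial_ideal_monom_mult[OF monomial_J _ keys_exp_part]
    by (simp add: exp_part_add)
  then have "is_ideal_in UNIV (supported_in ?Q :: ('w, 'k) mpoly set)"
    by (intro is_ideal_in_supported_in)
  moreover have "?P \<subseteq> supported_in ?Q"
    using prod_mem_supported_in by blast
  ultimately show "ideal_gen UNIV ?P \<subseteq> supported_in ?Q"
    by (rule ideal_gen_least)
  show "supported_in ?Q \<subseteq> ideal_gen UNIV ?P"
  proof
    fix f :: "('w, 'k) mpoly" assume f: "f \<in> supported_in ?Q"
    have "monom c \<in> ideal_gen UNIV ?P" if "c \<in> Poly_Mapping.keys f" for c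
    proof -
      have "monom c = (\<Prod>l\<in>UNIV. monom (exp_part grp l c) :: ('w, 'k) mpoly)"
        using monom_sum[of UNIV "\<lambda>l. exp_part grp l c"] by (simp add: sum_exp_part)
      also have "\<dots> \<in> ?P"
        using f that unfolding supported_in_def by blast
      finally show ?thesis
        using ideal_gen_superset[of ?P UNIV] by blast
    qed
    then have "(\<Sum>c\<in>Poly_Mapping.keys f. const (Poly_Mapping.lookup f c) * monom c) \<in> ideal_gen UNIV ?P"
      by (intro is_ideal_in_sum[OF is_ideal_in_ideal_gen_UNIV] ideal_gen_UNIV_mult)
    then show "f \<in> ideal_gen UNIV ?P"
      using poly_eq_sum_monoms[of f] by simp
  qed
qed

end

section \<open>The induced complex\<close>

locale induced_complex = min_graded_res I p \<beta> a lam
  for I :: "('v::finite, 'k::field) mpoly set" and p \<beta> a lam +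
  fixes m :: nat and aS :: "nat \<Rightarrow> 'v \<Rightarrow>\<^sub>0 nat" and grp :: "'w \<Rightarrow> 'v"
    and Lv :: "'v \<Rightarrow> nat \<Rightarrow> ('w, 'k) mpoly set" and L :: "nat \<Rightarrow> ('w, 'k) mpoly set"
  assumes beta_1: "\<beta> 1 = m"
    and a_1: "\<And>j. j < m \<Longrightarrow> a 1 j = aS j"
    and lam_1: "\<And>j. j < m \<Longrightarrow> lam 1 0 j = 1"
    and Lv_mon: "\<And>l j. j < m \<Longrightarrow> monomial_ideal_in {w. grp w = l} (Lv l (Poly_Mapping.lookup (aS j) l))"
    and Lv_mono: "\<And>l j k. j < m \<Longrightarrow> k < m \<Longrightarrow> Poly_Mapping.lookup (aS j) l \<ge> Poly_Mapping.lookup (aS k) l \<Longrightarrow>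
                    Lv l (Poly_Mapping.lookup (aS j) l) \<subseteq> Lv l (Poly_Mapping.lookup (aS k) l)"
    and L_def: "\<And>j. j < m \<Longrightarrow> L j = ideal_gen UNIV
                    {\<Prod>l\<in>UNIV. f l | f. \<forall>l. f l \<in> Lv l (Poly_Mapping.lookup (aS j) l)}"
begin

definition factor_in :: "'v \<Rightarrow> nat \<Rightarrow> ('w \<Rightarrow>\<^sub>0 nat) \<Rightarrow> bool" where
  "factor_in l j c \<longleftrightarrow> monom (exp_part grp l c) \<in> Lv l (Poly_Mapping.lookup (aS j) l)"

definition admissible :: "('w \<Rightarrow>\<^sub>0 nat) \<Rightarrow> bool" where
  "admissible c \<longleftrightarrow> (\<forall>l. \<exists>k<m. factor_in l k c)"

text \<open>For admissible \<open>c\<close>, \<open>top_degree c\<close> records in each block the largest exponent \<open>aS k l\<close>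
  whose factor contains the block part of \<open>c\<close>; for other \<open>c\<close> it is a junk value (\<open>Max {}\<close>).\<close>

definition top_degree :: "('w \<Rightarrow>\<^sub>0 nat) \<Rightarrow> 'v \<Rightarrow>\<^sub>0 nat" where
  "top_degree c = Abs_poly_mapping (\<lambda>l. Max {Poly_Mapping.lookup (aS k) l | k. k < m \<and> factor_in l k c})"

definition degree_ideal :: "('v \<Rightarrow>\<^sub>0 nat) \<Rightarrow> ('w, 'k) mpoly set" where
  "degree_ideal b = supported_in (\<lambda>c. admissible c \<and> mle b (top_degree c))"

text \<open>This is where the factors shrinking as the exponent grows (\<open>Lv_mono\<close>) enters.\<close>

lemma all_factor_in_iff:
  assumes j: "j < m"
  shows "(\<forall>l. factor_in l j c) \<longleftrightarrow> admissible c \<and> mle (aS j) (top_degree c)"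
proof -
  let ?E = "\<lambda>l. {Poly_Mapping.lookup (aS k) l | k. k < m \<and> factor_in l k c}"
  have finite_E: "finite (?E l)" for l
    by (rule finite_subset[of _ "(\<lambda>k. Poly_Mapping.lookup (aS k) l) ` {..<m}"]) auto
  have lookup_top: "Poly_Mapping.lookup (top_degree c) l = Max (?E l)" for l
    by (simp add: top_degree_def)
  show ?thesis
  proof
    assume "\<forall>l. factor_in l j c"
    then show "admissible c \<and> mle (aS j) (top_degree c)"
      using j finite_E by (auto simp: admissible_def mle_def lookup_top intro!: Max_ge)
  next
    assume c: "admissible c \<and> mle (aS j) (top_degree c)"
    show "\<forall>l. factor_in l j c"
    proof
      fix l
      have "?E l \<noteq> {}"
        using c by (auto simp: admissible_def)
      then obtain k where k: "k < m" "factor_in l k c" "Max (?E l) = Poly_Mapping.lookup (aS k) l"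
        using Max_in[OF finite_E] by auto
      then have "Poly_Mapping.lookup (aS j) l \<le> Poly_Mapping.lookup (aS k) l"
        using c by (metis mle_def lookup_top)
      then show "factor_in l j c"
        using k Lv_mono[OF k(1) j] by (auto simp: factor_in_def)
    qed
  qed
qed

lemma L_eq_degree_ideal:
  assumes j: "j < m"
  shows "L j = degree_ideal (aS j)"
proof -
  have "L j = supported_in (\<lambda>c. \<forall>l. factor_in l j c)"
    unfolding L_def[OF j] factor_in_def
    by (rule ideal_gen_products_eq[of grp "\<lambda>l. Lv l (Poly_Mapping.lookup (aS j) l)", OF Lv_mon[OF j]])
  then show ?thesis
    by (simp add: degree_ideal_def all_factor_in_iff[OF j])
qed

lemma Lind_eq_degree_ideal:
  "j < \<beta> (Suc i) \<Longrightarrow> Lind \<beta> lam L (Suc i) j = degree_ideal (a (Suc i) j)"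
proof (induction i arbitrary: j)
  case 0
  then show ?case
    using L_eq_degree_ideal a_1 beta_1 by simp
next
  case (Suc i)
  let ?col = "{k. k < \<beta> (Suc i) \<and> lam (Suc (Suc i)) k j \<noteq> 0}"
  have "{Lind \<beta> lam L (Suc i) k | k. k < \<beta> (Suc i) \<and> lam (Suc (Suc i)) k j \<noteq> 0} =
          (\<lambda>k. degree_ideal (a (Suc i) k)) ` ?col"
    unfolding setcompr_eq_image by (rule image_cong) (simp_all add: Suc.IH)
  then have "Lind \<beta> lam L (Suc (Suc i)) j = \<Inter> ((\<lambda>k. degree_ideal (a (Suc i) k)) ` ?col)"
    by simp
  also have "\<dots> = supported_in (\<lambda>c. \<forall>k\<in>?col. admissible c \<and> mle (a (Suc i) k) (top_degree c))"
    unfolding degree_ideal_def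
    by (rule Inter_supported_in) (use lam_column_nonzero[of "Suc i" j] Suc.prems in auto)
  also have "\<dots> = degree_ideal (a (Suc (Suc i)) j)"
  proof -
    have "(\<forall>k\<in>?col. admissible c \<and> mle (a (Suc i) k) (top_degree c)) \<longleftrightarrow>
            admissible c \<and> mle (a (Suc (Suc i)) j) (top_degree c)" for c
      using mle_degree_iff_column_degrees[of "Suc i" j "top_degree c"]
        lam_column_nonzero[of "Suc i" j] Suc.prems by auto
    then show ?thesis
      by (simp add: degree_ideal_def)
  qed
  finally show ?case .
qed

lemma mem_Fstar_iff:
  assumes "1 \<le> i"
  shows "u \<in> Fstar \<beta> lam L i \<longleftrightarrow>
     (\<forall>j<\<beta> i. \<forall>c\<in>Poly_Mapping.keys (u j). admissible c \<and> mle (a i j) (top_degree c)) \<and>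
     (\<forall>j\<ge>\<beta> i. u j = 0)"
proof -
  obtain i' where "i = Suc i'"
    using assms by (cases i) auto
  then show ?thesis
    using Lind_eq_degree_ideal by (simp add: Fstar_def degree_ideal_def supported_in_def)
qed

lemma lookup_dstar:
  "k < \<beta> (i - 1) \<Longrightarrow>
     Poly_Mapping.lookup (dstar \<beta> lam i u k) c = (\<Sum>j<\<beta> i. lam i k j * Poly_Mapping.lookup (u j) c)"
  by (simp add: dstar_def lookup_sum lookup_const_mult)

lemma dstar_dstar:
  fixes U :: "nat \<Rightarrow> ('w, 'k) mpoly"
  assumes i: "1 \<le> i" "i \<le> p"
  shows "dstar \<beta> lam i (dstar \<beta> lam (Suc i) U) = (\<lambda>_. 0)"
proof
  fix k
  show "dstar \<beta> lam i (dstar \<beta> lam (Suc i) U) k = 0"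
  proof (cases "k < \<beta> (i - 1)")
    case k: True
    show ?thesis
    proof (rule poly_mapping_eqI)
      fix c
      have "Poly_Mapping.lookup (dstar \<beta> lam i (dstar \<beta> lam (Suc i) U) k) c =
          (\<Sum>j<\<beta> i. lam i k j * (\<Sum>j'<\<beta> (Suc i). lam (Suc i) j j' * Poly_Mapping.lookup (U j') c))"
        using k by (simp add: lookup_dstar)
      also have "\<dots> = (\<Sum>j'<\<beta> (Suc i). (\<Sum>j<\<beta> i. lam i k j * lam (Suc i) j j') * Poly_Mapping.lookup (U j') c)"
        by (simp add: sum_distrib_left sum_distrib_right mult.assoc sum.swap[of _ "{..<\<beta> i}"])
      also have "\<dots> = 0"
        using lam_mult_lam[OF i _ k] by simp
      finally show "Poly_Mapping.lookup (dstar \<beta> lam i (dstar \<beta> lam (Suc i) U) k) c = Poly_Mapping.lookup 0 c"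
        by simp
    qed
  qed (simp add: dstar_def)
qed

lemma dstar_mem_Fstar:
  fixes U :: "nat \<Rightarrow> ('w, 'k) mpoly"
  assumes i: "1 \<le> i" and U: "U \<in> Fstar \<beta> lam L (Suc i)"
  shows "dstar \<beta> lam (Suc i) U \<in> Fstar \<beta> lam L i"
  unfolding mem_Fstar_iff[OF i]
proof (rule conjI; intro allI impI ballI)
  fix j c assume j: "j < \<beta> i" and c: "c \<in> Poly_Mapping.keys (dstar \<beta> lam (Suc i) U j)"
  then obtain j' where j': "j' < \<beta> (Suc i)" and "c \<in> Poly_Mapping.keys (const (lam (Suc i) j j') * U j')"
    using keys_sum[of "\<lambda>j'. const (lam (Suc i) j j') * U j'" "{..<\<beta> (Suc i)}"] by (auto simp: dstar_def)
  then have "lam (Suc i) j j' \<noteq> 0" and "c \<in> Poly_Mapping.keys (U j')"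
    using keys_const_mult_subset by (auto simp: in_keys_iff lookup_const_mult)
  then have "mle (a i j) (a (Suc i) j')" and "admissible c \<and> mle (a (Suc i) j') (top_degree c)"
    using lam_nonzero_degree[of "Suc i" j' j] j j' U mem_Fstar_iff[of "Suc i" U] by auto
  then show "admissible c \<and> mle (a i j) (top_degree c)"
    using mle_trans by blast
next
  show "dstar \<beta> lam (Suc i) U j = 0" if "\<beta> i \<le> j" for j
    using that by (simp add: dstar_def)
qed

text \<open>At the monomial \<open>x^c\<close>, a cycle of \<open>F*\<close> is a cycle of the strand of the resolution in
  degree \<open>top_degree c\<close>, so it lifts there.\<close>

lemma Fstar_cycle_coeff_lift:
  assumes i: "1 \<le> i" "i \<le> p"
    and u: "u \<in> Fstar \<beta> lam L i" and cycle: "dstar \<beta> lam i u = (\<lambda>_. 0)"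
  shows "\<exists>w. (\<forall>j'. w j' \<noteq> 0 \<longrightarrow> j' < \<beta> (Suc i) \<and> mle (a (Suc i) j') (top_degree c)) \<and>
           (\<forall>j<\<beta> i. Poly_Mapping.lookup (u j) c = (\<Sum>j'<\<beta> (Suc i). lam (Suc i) j j' * w j'))"
proof -
  have "j < \<beta> i \<and> mle (a i j) (top_degree c)" if "Poly_Mapping.lookup (u j) c \<noteq> 0" for j
    using that u mem_Fstar_iff[OF i(1)] by (metis in_keys_iff lookup_zero not_le)
  moreover have "(\<Sum>j<\<beta> i. lam i k j * Poly_Mapping.lookup (u j) c) = 0" if "k < \<beta> (i - 1)" for k
    using lookup_dstar[OF that, of u c] cycle by simp
  ultimately show ?thesis
    by (rule strand_exact[OF i]) auto
qed

lemma Fstar_cycle_is_boundary: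
  assumes i: "1 \<le> i" "i \<le> p"
    and u: "u \<in> Fstar \<beta> lam L i" and cycle: "dstar \<beta> lam i u = (\<lambda>_. 0)"
  shows "u \<in> dstar \<beta> lam (Suc i) ` Fstar \<beta> lam L (Suc i)"
proof -
  have u_supp: "\<And>j c. j < \<beta> i \<Longrightarrow> c \<in> Poly_Mapping.keys (u j) \<Longrightarrow> admissible c \<and> mle (a i j) (top_degree c)"
    and u_0: "\<And>j. \<beta> i \<le> j \<Longrightarrow> u j = 0"
    using u mem_Fstar_iff[OF i(1)] by auto
  obtain W where W_supp: "\<And>c j'. W c j' \<noteq> 0 \<Longrightarrow> j' < \<beta> (Suc i) \<and> mle (a (Suc i) j') (top_degree c)"
    and u_W: "\<And>c j. j < \<beta> i \<Longrightarrow> Poly_Mapping.lookup (u j) c = (\<Sum>j'<\<beta> (Suc i). lam (Suc i) j j' * W c j')"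
    using Fstar_cycle_coeff_lift[OF i u cycle] by metis
  define K where "K = (\<Union>j<\<beta> i. Poly_Mapping.keys (u j))"
  define U where "U j' = poly_of_coeffs K (\<lambda>c. W c j')" for j'
  have lookup_U: "Poly_Mapping.lookup (U j') c = (if c \<in> K then W c j' else 0)" for j' c
    by (simp add: U_def K_def lookup_poly_of_coeffs)
  have Suc_i: "1 \<le> Suc i"
    by simp
  have "U \<in> Fstar \<beta> lam L (Suc i)"
    unfolding mem_Fstar_iff[OF Suc_i]
  proof (rule conjI; intro allI impI ballI)
    fix j' c assume "c \<in> Poly_Mapping.keys (U j')"
    then have "c \<in> K" and "W c j' \<noteq> 0"
      by (auto simp: in_keys_iff lookup_U split: if_splits)
    then show "admissible c \<and> mle (a (Suc i) j') (top_degree c)"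
      using u_supp W_supp by (auto simp: K_def)
  next
    fix j' assume "\<beta> (Suc i) \<le> j'"
    then show "U j' = 0"
      using W_supp by (intro poly_mapping_eqI) (force simp: lookup_U)
  qed
  moreover have "dstar \<beta> lam (Suc i) U = u"
  proof
    fix k
    show "dstar \<beta> lam (Suc i) U k = u k"
    proof (cases "k < \<beta> i")
      case k: True
      show ?thesis
      proof (rule poly_mapping_eqI)
        fix c
        show "Poly_Mapping.lookup (dstar \<beta> lam (Suc i) U k) c = Poly_Mapping.lookup (u k) c"
          using k u_W[OF k, of c] lookup_dstar[of k "Suc i" U c]
          by (cases "c \<in> K") (auto simp: lookup_U K_def in_keys_iff)
      qed
    qed (simp add: dstar_def u_0)
  qed
  ultimately show ?thesis
    by blast
qed

lemma Fstar_exact: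
  "1 \<le> i \<Longrightarrow> i \<le> p \<Longrightarrow>
     {u \<in> Fstar \<beta> lam L i. dstar \<beta> lam i u = (\<lambda>_. 0)} = dstar \<beta> lam (Suc i) ` Fstar \<beta> lam L (Suc i)"
  using Fstar_cycle_is_boundary dstar_mem_Fstar dstar_dstar by blast

lemma Fstar_1: "Fstar \<beta> lam L 1 = {u. (\<forall>j<m. u j \<in> L j) \<and> (\<forall>j\<ge>m. u j = 0)}"
  by (simp add: Fstar_def beta_1[unfolded One_nat_def])

lemma dstar_1:
  fixes u :: "nat \<Rightarrow> ('w, 'k) mpoly"
  shows "dstar \<beta> lam 1 u = (\<lambda>k. if k = 0 then \<Sum>j<m. u j else 0)"
proof
  fix k
  show "dstar \<beta> lam 1 u k = (if k = 0 then \<Sum>j<m. u j else 0)"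
  proof (cases "k = 0")
    case True
    have "dstar \<beta> lam 1 u k = (\<Sum>j<m. const (lam 1 0 j) * u j)"
      using True by (simp add: dstar_def beta_0 beta_1[unfolded One_nat_def])
    also have "\<dots> = (\<Sum>j<m. u j)"
      using lam_1 by (intro sum.cong) simp_all
    finally show ?thesis
      using True by simp
  qed (simp add: dstar_def beta_0)
qed

lemma dstar_1_image:
  "dstar \<beta> lam 1 ` Fstar \<beta> lam L 1 = {u. u 0 \<in> ideal_gen UNIV (\<Union>j<m. L j) \<and> (\<forall>k\<ge>1. u k = 0)}"
proof -
  have "is_ideal_in UNIV (L j)" if "j < m" for j
    using L_def[OF that] is_ideal_in_ideal_gen_UNIV by simp
  then have sums: "ideal_gen UNIV (\<Union>j<m. L j) = {\<Sum>j<m. u j | u. \<forall>j<m. u j \<in> L j}"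
    by (rule ideal_gen_UN_eq_sums)
  show ?thesis
  proof (intro set_eqI iffI)
    fix x :: "nat \<Rightarrow> ('w, 'k) mpoly" assume "x \<in> dstar \<beta> lam 1 ` Fstar \<beta> lam L 1"
    then obtain u where u: "u \<in> Fstar \<beta> lam L 1" and x: "x = dstar \<beta> lam 1 u"
      by blast
    have "x 0 = (\<Sum>j<m. u j)" and "\<forall>k\<ge>1. x k = 0"
      unfolding x dstar_1 by simp_all
    moreover have "\<forall>j<m. u j \<in> L j"
      using u unfolding Fstar_1 by simp
    ultimately show "x \<in> {u. u 0 \<in> ideal_gen UNIV (\<Union>j<m. L j) \<and> (\<forall>k\<ge>1. u k = 0)}"
      unfolding sums by blast
  next
    fix x :: "nat \<Rightarrow> ('w, 'k) mpoly" assume "x \<in> {u. u 0 \<in> ideal_gen UNIV (\<Union>j<m. L j) \<and> (\<forall>k\<ge>1. u k = 0)}"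
    then obtain u where "x 0 = (\<Sum>j<m. u j)" "\<forall>j<m. u j \<in> L j" "\<forall>k\<ge>1. x k = 0"
      unfolding sums by auto
    then have "x = dstar \<beta> lam 1 (\<lambda>j. if j < m then u j else 0)"
      and "(\<lambda>j. if j < m then u j else 0) \<in> Fstar \<beta> lam L 1"
      unfolding dstar_1 Fstar_1 by auto
    then show "x \<in> dstar \<beta> lam 1 ` Fstar \<beta> lam L 1"
      by blast
  qed
qed

end

theorem theorem1p4:
  fixes I :: "('v::finite, 'k::field) mpoly set"
    and m :: nat and aS :: "nat \<Rightarrow> ('v \<Rightarrow>\<^sub>0 nat)"
    and p :: nat and \<beta> :: "nat \<Rightarrow> nat" and a :: "nat \<Rightarrow> nat \<Rightarrow> ('v \<Rightarrow>\<^sub>0 nat)"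
    and lam :: "nat \<Rightarrow> nat \<Rightarrow> nat \<Rightarrow> 'k"
    and grp :: "'w::finite \<Rightarrow> 'v"
    and Lv :: "'v \<Rightarrow> nat \<Rightarrow> ('w, 'k) mpoly set"
    and L :: "nat \<Rightarrow> ('w, 'k) mpoly set"
  assumes I_mon: "monomial_ideal_in UNIV I"
    and I_proper: "I \<noteq> UNIV"
    and G_I: "inj_on aS {..<m}" "aS ` {..<m} = mingens I"
    and res: "is_min_graded_res I p \<beta> a lam"
    and beta1: "\<beta> 1 = m"
    and a1: "\<And>j. j < m \<Longrightarrow> a 1 j = aS j"
    and lam1: "\<And>j. j < m \<Longrightarrow> lam 1 0 j = 1"
    and grp_surj: "surj grp"
    and Lv_mon: "\<And>l j. j < m \<Longrightarrow> monomial_ideal_in {w. grp w = l} (Lv l (Poly_Mapping.lookup (aS j) l))"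
    and Lv_mono: "\<And>l j k. j < m \<Longrightarrow> k < m \<Longrightarrow> Poly_Mapping.lookup (aS j) l \<ge> Poly_Mapping.lookup (aS k) l \<Longrightarrow>
                    Lv l (Poly_Mapping.lookup (aS j) l) \<subseteq> Lv l (Poly_Mapping.lookup (aS k) l)"
    and L_def: "\<And>j. j < m \<Longrightarrow> L j = ideal_gen UNIV
                    {\<Prod>l\<in>UNIV. f l | f. \<forall>l. f l \<in> Lv l (Poly_Mapping.lookup (aS j) l)}"
  shows "dstar \<beta> lam 1 ` Fstar \<beta> lam L 1 =
           {u. u 0 \<in> ideal_gen UNIV (\<Union>j<m. L j) \<and> (\<forall>k\<ge>1. u k = 0)}
       \<and> (\<forall>i. 1 \<le> i \<and> i \<le> p \<longrightarrow>
           {u \<in> Fstar \<beta> lam L i. dstar \<beta> lam i u = (\<lambda>_. 0)} = dstar \<beta> lam (Suc i) ` Fstar \<beta> lam L (Suc i))"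
proof -
  interpret induced_complex I p \<beta> a lam m aS grp Lv L
    by unfold_locales (use res beta1 a1 lam1 Lv_mon Lv_mono L_def in auto)
  show ?thesis
    using dstar_1_image Fstar_exact by blast
qed

end
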